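(* For the RHA process and all $n\ge0$, $j\ge1$, $$H(X^n_j)\le\min_{0\le l\le n}\Big(H(\mathcal G_{\le l})+2^{n-l}\log k_l\Big),$$ where $H(\mathcal G_{\le0})=0$.
   Context: Random hierarchical association (RHA) process. Fix positive integers $(k_n)_{n\ge0}$ (perplexities) with $k_{n-1}\le k_n\le k_{n-1}^2$ for all $n\ge1$. On a probability space $(\Omega,\mathcal J,P)$ let, for each $n\ge1$, $(L_{nj},R_{nj})_{j=1}^{k_n}$ be the lexicographically sorted enumeration of a uniformly random $k_n$-element subset of $\{1,\dots,k_{n-1}\}^2$ (each of the $\binom{k_{n-1}^2}{k_n}$ subsets equally likely), independently over $n$. Let $(C_n)_{n\ge0}$ be independent, independent of all $(L_{nj},R_{nj})$, with $C_n$ uniform on $\{1,\dots,k_n\}$. Define strings $Y^0_j=j$ (length 1) for $1\le j\le k_0$ and $Y^n_j=Y^{n-1}_{L_{nj}}Y^{n-1}_{R_{nj}}$ (concatenation). The RHA process is $\mathcal X=Y^0_{C_0}Y^1_{C_1}Y^2_{C_2}\cdots=X_1X_2X_3\cdots$, $X_{k:l}=X_k\cdots X_l$; for $n\ge0$, $j\ge1$, $X^n_j=X_{j2^n:(j+1)2^n-1}$. $\mathcal G_{\le n}=(L_{lj},R_{lj})_{1\le l\le n,\,1\le j\le k_l}$ ($\mathcal G_{\le0}$ trivial). $H(X)=\mathbb E_P[-\log P(X)]$ with natural logarithm. *)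

theory Defs
  imports "HOL-Probability.Probability"
begin

text \<open>Random hierarchical association process. The random k_n-subset of
  {1..k_(n-1)}^2 at level n is S n; its lexicographically sorted enumeration
  gives (L_nj, R_nj), 1-indexed.\<close>

definition lex_less :: "nat \<times> nat \<Rightarrow> nat \<times> nat \<Rightarrow> bool" where
  "lex_less p q \<longleftrightarrow> fst p < fst q \<or> (fst p = fst q \<and> snd p < snd q)"

definition lex_sorted_list :: "(nat \<times> nat) set \<Rightarrow> (nat \<times> nat) list" where
  "lex_sorted_list A = (THE xs. set xs = A \<and> sorted_wrt lex_less xs)"

definition rha_L :: "(nat \<Rightarrow> (nat \<times> nat) set) \<Rightarrow> nat \<Rightarrow> nat \<Rightarrow> nat" where
  "rha_L S n j = fst (lex_sorted_list (S n) ! (j - 1))"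

definition rha_R :: "(nat \<Rightarrow> (nat \<times> nat) set) \<Rightarrow> nat \<Rightarrow> nat \<Rightarrow> nat" where
  "rha_R S n j = snd (lex_sorted_list (S n) ! (j - 1))"

fun rha_Y :: "(nat \<Rightarrow> (nat \<times> nat) set) \<Rightarrow> nat \<Rightarrow> nat \<Rightarrow> nat list" where
  "rha_Y S 0 j = [j]"
| "rha_Y S (Suc n) j = rha_Y S n (rha_L S (Suc n) j) @ rha_Y S n (rha_R S (Suc n) j)"

text \<open>X_i (1-indexed, i >= 1): the i-th symbol of Y^0_{C_0} Y^1_{C_1} ...;
  the first i blocks already have length 2^i - 1 >= i.\<close>
definition rha_X :: "(nat \<Rightarrow> (nat \<times> nat) set) \<Rightarrow> (nat \<Rightarrow> nat) \<Rightarrow> nat \<Rightarrow> nat" where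
  "rha_X S C i = concat (map (\<lambda>m. rha_Y S m (C m)) [0..<i]) ! (i - 1)"

definition rha_block :: "(nat \<Rightarrow> (nat \<times> nat) set) \<Rightarrow> (nat \<Rightarrow> nat) \<Rightarrow> nat \<Rightarrow> nat \<Rightarrow> nat list" where
  "rha_block S C n j = map (rha_X S C) [j * 2 ^ n ..< (j + 1) * 2 ^ n]"

text \<open>G_{<=n} = (L_lj, R_lj)_{1<=l<=n, 1<=j<=k_l}, i.e. the sorted enumerations of S 1, ..., S n
  (empty list, i.e. trivial, for n = 0).\<close>
definition rha_G :: "(nat \<Rightarrow> (nat \<times> nat) set) \<Rightarrow> nat \<Rightarrow> (nat \<times> nat) list list" where
  "rha_G S n = map (\<lambda>l. lex_sorted_list (S l)) [1..<n + 1]"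

definition entropy_H :: "'a measure \<Rightarrow> ('a \<Rightarrow> 'b) \<Rightarrow> real" where
  "entropy_H M X = (\<integral>\<omega>. - ln (measure M {\<omega>' \<in> space M. X \<omega>' = X \<omega>}) \<partial>M)"

end

theory Submission
  imports Defs
begin

text \<open>Choose \<open>e\<close> with \<open>2^e \<le> j < 2^(e+1)\<close>. The block \<open>X^n_j\<close> is a window of length \<open>2^n\<close> inside
  \<open>Y^(n+e)_(C_(n+e))\<close>. Expanding that string only down to level \<open>l\<close> writes it as a concatenation
  of level-\<open>l\<close> strings \<open>Y^l_d\<close> of length \<open>2^l\<close>, so the block is the concatenation of the strings of
  \<open>2^(n-l)\<close> consecutive level-\<open>l\<close> symbols. These strings are functions of \<open>G_(\<le>l)\<close>, hence the block is
  a function of the pair \<open>(G_(\<le>l), window)\<close>, where the window of symbols takes at most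
  \<open>k_l^(2^(n-l))\<close> values. Entropy does not increase under functions, and the entropy of a pair is at
  most that of its first component plus the log of the number of values of the second.\<close>

section \<open>Expanding symbols down to a lower level\<close>

lemma lex_less_linorder: "class.linorder (\<lambda>p q. lex_less p q \<or> p = q) lex_less"
  by unfold_locales (auto simp: lex_less_def)

lemma
  assumes "finite A"
  shows set_lex_sorted_list: "set (lex_sorted_list A) = A"
    and length_lex_sorted_list: "length (lex_sorted_list A) = card A"
proof -
  have "\<exists>!xs. set xs = A \<and> sorted_wrt lex_less xs"
    using linorder.ex1_sorted_list_for_set_if_finite[OF lex_less_linorder assms] by metis
  then have sorted: "set (lex_sorted_list A) = A \<and> sorted_wrt lex_less (lex_sorted_list A)"
    unfolding lex_sorted_list_def by (rule theI')
  have "distinct xs" if "sorted_wrt lex_less xs" for xs :: "(nat \<times> nat) list"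
    using that by (induction xs) (auto simp: lex_less_def)
  with sorted show "set (lex_sorted_list A) = A" "length (lex_sorted_list A) = card A"
    by (metis distinct_card)+
qed

text \<open>\<open>expand gs l n j\<close> is the list of level-\<open>l\<close> symbols whose strings concatenate to the string
  of the level-\<open>n\<close> symbol \<open>j\<close>; \<open>gs ! i\<close> is the enumeration of the pairs of level \<open>i + 1\<close>.\<close>

fun expand :: "(nat \<times> nat) list list \<Rightarrow> nat \<Rightarrow> nat \<Rightarrow> nat \<Rightarrow> nat list" where
  "expand gs l 0 j = [j]"
| "expand gs l (Suc n) j = (if Suc n \<le> l then [j] else
     expand gs l n (fst (gs ! n ! (j - 1))) @ expand gs l n (snd (gs ! n ! (j - 1))))"

lemma length_expand [simp]: "length (expand gs l n j) = 2 ^ (n - l)"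
proof (induction n arbitrary: j)
  case (Suc n)
  then show ?case
    by (cases "Suc n \<le> l") (simp_all add: Suc_diff_le)
qed simp

lemma expand_expand:
  assumes "l \<le> l'" "l' \<le> n"
  shows "concat (map (expand gs l l') (expand gs l' n j)) = expand gs l n j"
  using assms
proof (induction n arbitrary: j)
  case (Suc n)
  then show ?case
    by (cases "l' = Suc n") (simp_all add: map_concat)
qed simp

lemma expand_take: "n \<le> m \<Longrightarrow> expand (take m gs) l n j = expand gs l n j"
  by (induction n arbitrary: j) auto

text \<open>The possible values of \<open>rha_G S m\<close>.\<close>

definition rha_rules :: "(nat \<Rightarrow> nat) \<Rightarrow> nat \<Rightarrow> (nat \<times> nat) list list set" where
  "rha_rules k m = {gs. length gs = m \<and>
     (\<forall>i<m. length (gs ! i) = k (Suc i) \<and> set (gs ! i) \<subseteq> {1..k i} \<times> {1..k i})}"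

lemma take_in_rha_rules: "gs \<in> rha_rules k m \<Longrightarrow> l \<le> m \<Longrightarrow> take l gs \<in> rha_rules k l"
  by (auto simp: rha_rules_def)

lemma finite_rha_rules: "finite (rha_rules k m)"
proof -
  define B where "B = (\<Union>i<m. {xs. set xs \<subseteq> {1..k i} \<times> {1..k i} \<and> length xs = k (Suc i)})"
  have "finite B"
    unfolding B_def by (intro finite_UN_I finite_lists_length_eq) auto
  moreover have "rha_rules k m \<subseteq> {gs. set gs \<subseteq> B \<and> length gs = m}"
    unfolding rha_rules_def B_def by (auto simp: in_set_conv_nth) (metis lessThan_iff)
  ultimately show ?thesis
    using finite_lists_length_eq finite_subset by blast
qed

lemma set_expand_subset:
  assumes gs: "gs \<in> rha_rules k m" and "l \<le> n" "n \<le> m" "j \<in> {1..k n}"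
  shows "set (expand gs l n j) \<subseteq> {1..k l}"
  using assms(2-)
proof (induction n arbitrary: j)
  case (Suc n)
  show ?case
  proof (cases "l = Suc n")
    case False
    have "n < m" "j - 1 < k (Suc n)"
      using Suc.prems by auto
    then have "gs ! n ! (j - 1) \<in> set (gs ! n)" "set (gs ! n) \<subseteq> {1..k n} \<times> {1..k n}"
      using gs by (auto simp: rha_rules_def)
    then have "fst (gs ! n ! (j - 1)) \<in> {1..k n}" "snd (gs ! n ! (j - 1)) \<in> {1..k n}"
      by (auto simp: mem_Times_iff)
    moreover have "l \<le> n" "n \<le> m"
      using Suc.prems False by auto
    moreover have "expand gs l (Suc n) j
        = expand gs l n (fst (gs ! n ! (j - 1))) @ expand gs l n (snd (gs ! n ! (j - 1)))"
      using \<open>l \<le> n\<close> by simp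
    ultimately show ?thesis
      using Suc.IH by (simp only: set_append Un_subset_iff)
  next
    case True
    then have "expand gs l (Suc n) j = [j]"
      by simp
    then show ?thesis
      using True Suc.prems(3) by simp
  qed
next
  case 0
  then show ?case by simp
qed

lemma window_expand_in_lists:
  assumes "gs \<in> rha_rules k (n + e)" "c \<in> {1..k (n + e)}" "l \<le> n" "t < 2 ^ e"
  shows "take (2 ^ (n - l)) (drop (t * 2 ^ (n - l)) (expand gs l (n + e) c))
    \<in> {zs. set zs \<subseteq> {1..k l} \<and> length zs = 2 ^ (n - l)}"
proof -
  have "(t + 1) * 2 ^ (n - l) \<le> 2 ^ e * 2 ^ (n - l)"
    using assms(4) by (intro mult_le_mono1) simp
  also have "\<dots> = 2 ^ (n + e - l)"
    using assms(3) by (simp add: power_add[symmetric])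
  finally have "t * 2 ^ (n - l) + 2 ^ (n - l) \<le> length (expand gs l (n + e) c)"
    by simp
  moreover have "set (expand gs l (n + e) c) \<subseteq> {1..k l}"
    using set_expand_subset[OF assms(1) _ _ assms(2)] assms(3) by simp
  ultimately show ?thesis
    by (auto dest!: in_set_takeD in_set_dropD)
qed

section \<open>Blocks as concatenations of level-\<open>l\<close> strings\<close>

lemma rha_G_nth: "i < N \<Longrightarrow> rha_G S N ! i = lex_sorted_list (S (Suc i))"
  by (simp add: rha_G_def del: upt_Suc)

lemma take_rha_G: "l \<le> N \<Longrightarrow> take l (rha_G S N) = rha_G S l"
  by (simp add: rha_G_def take_map take_upt del: upt_Suc)

lemma rha_Y_eq_expand: "n \<le> N \<Longrightarrow> rha_Y S n j = expand (rha_G S N) 0 n j"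
  by (induction n arbitrary: j) (auto simp: rha_G_nth rha_L_def rha_R_def)

lemma length_rha_Y [simp]: "length (rha_Y S n j) = 2 ^ n"
  by (induction n arbitrary: j) auto

lemma length_concat_rha_Y: "length (concat (map (\<lambda>i. rha_Y S i (C i)) [0..<m])) = 2 ^ m - 1"
proof (induction m)
  case (Suc m)
  have "(1::nat) \<le> 2 ^ m" by simp
  with Suc show ?case by simp
qed simp

lemma rha_X_eq_nth_rha_Y:
  assumes "2 ^ m \<le> p" "p < 2 ^ Suc m"
  shows "rha_X S C p = rha_Y S m (C m) ! (p - 2 ^ m)"
proof -
  have "m < p"
    using less_exp[of m] assms by linarith
  then have "[0..<p] = [0..<m] @ [m] @ [Suc m..<p]"
    using upt_add_eq_append[of 0 m "p - m"] upt_conv_Cons[of m p] by simp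
  then have "rha_X S C p = (concat (map (\<lambda>i. rha_Y S i (C i)) [0..<m]) @ rha_Y S m (C m)
      @ concat (map (\<lambda>i. rha_Y S i (C i)) [Suc m..<p])) ! (p - 1)"
    unfolding rha_X_def by simp
  moreover have "\<not> p - 1 < 2 ^ m - 1" "p - 1 - (2 ^ m - 1) = p - 2 ^ m" "p - 2 ^ m < 2 ^ m"
    using assms one_le_power[of 2 m] by auto
  ultimately show ?thesis
    by (simp add: nth_append length_concat_rha_Y)
qed

lemma drop_concat_const_length:
  assumes "\<forall>x\<in>set xs. length (f x) = L"
  shows "drop (b * L) (concat (map f xs)) = concat (map f (drop b xs))"
  using assms
proof (induction xs arbitrary: b)
  case (Cons x xs)
  then show ?case
    by (cases b) simp_all
qed simp

lemma take_concat_const_length: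
  assumes "\<forall>x\<in>set xs. length (f x) = L"
  shows "take (a * L) (concat (map f xs)) = concat (map f (take a xs))"
  using assms
proof (induction xs arbitrary: a)
  case (Cons x xs)
  then show ?case
    by (cases a) simp_all
qed simp

lemma map_nth_upt_eq_take_drop:
  assumes "a + b \<le> length xs"
  shows "map (\<lambda>p. xs ! (p - c)) [c + a..<c + a + b] = take b (drop a xs)"
  by (rule nth_equalityI) (use assms in auto)

lemma rha_block_eq_take_drop:
  assumes "2 ^ e \<le> j" "j < 2 ^ Suc e"
  shows "rha_block S C n j = take (2 ^ n) (drop ((j - 2 ^ e) * 2 ^ n) (rha_Y S (n + e) (C (n + e))))"
proof -
  define m t where "m = n + e" and "t = j - 2 ^ e"
  have j: "j = 2 ^ e + t"
    using assms by (simp add: t_def)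
  have "(t + 1) * 2 ^ n \<le> 2 ^ e * 2 ^ n"
    using assms j by (intro mult_le_mono1) simp
  then have upper: "2 ^ m + t * 2 ^ n + 2 ^ n \<le> 2 ^ Suc m"
    by (simp add: m_def power_add algebra_simps)
  have start: "j * 2 ^ n = 2 ^ m + t * 2 ^ n" and stop: "(j + 1) * 2 ^ n = 2 ^ m + t * 2 ^ n + 2 ^ n"
    by (simp_all add: j m_def algebra_simps power_add)
  have "rha_block S C n j
      = map (\<lambda>p. rha_Y S m (C m) ! (p - 2 ^ m)) [2 ^ m + t * 2 ^ n..<2 ^ m + t * 2 ^ n + 2 ^ n]"
    unfolding rha_block_def start stop
    by (rule map_cong[OF refl], rule rha_X_eq_nth_rha_Y) (use upper in auto)
  also have "\<dots> = take (2 ^ n) (drop (t * 2 ^ n) (rha_Y S m (C m)))"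
    by (rule map_nth_upt_eq_take_drop) (use upper in simp)
  finally show ?thesis
    unfolding m_def t_def .
qed

lemma rha_block_eq_expand:
  assumes "2 ^ e \<le> j" "j < 2 ^ Suc e" "l \<le> n"
  shows "rha_block S C n j = concat (map (expand (rha_G S l) 0 l)
    (take (2 ^ (n - l)) (drop ((j - 2 ^ e) * 2 ^ (n - l)) (expand (rha_G S (n + e)) l (n + e) (C (n + e))))))"
proof -
  define gs where "gs = rha_G S (n + e)"
  define ds where "ds = expand gs l (n + e) (C (n + e))"
  have pow: "2 ^ n = 2 ^ (n - l) * (2::nat) ^ l"
    using assms(3) by (simp add: power_add[symmetric])
  have "rha_Y S (n + e) (C (n + e)) = concat (map (expand gs 0 l) ds)"
    using assms(3) by (simp add: gs_def ds_def rha_Y_eq_expand expand_expand)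
  then have "rha_block S C n j
      = take (2 ^ (n - l) * 2 ^ l) (drop ((j - 2 ^ e) * 2 ^ (n - l) * 2 ^ l) (concat (map (expand gs 0 l) ds)))"
    using rha_block_eq_take_drop[OF assms(1,2)] by (simp add: pow mult.assoc)
  also have "\<dots> = concat (map (expand gs 0 l) (take (2 ^ (n - l)) (drop ((j - 2 ^ e) * 2 ^ (n - l)) ds)))"
    by (simp add: drop_concat_const_length take_concat_const_length)
  also have "expand gs 0 l = expand (take l gs) 0 l"
    by (simp add: expand_take fun_eq_iff)
  also have "take l gs = rha_G S l"
    using assms(3) by (simp add: gs_def take_rha_G)
  finally show ?thesis
    unfolding ds_def gs_def .
qed

section \<open>Entropy of finitely supported random variables\<close>

lemma sets_Collect_count_space_comp:
  assumes "X \<in> M \<rightarrow>\<^sub>M count_space UNIV"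
  shows "{\<omega>\<in>space M. P (X \<omega>)} \<in> sets M"
  by (rule predE, rule pred_sets1[OF _ assms]) simp

lemma neg_ln_mult_le:
  fixes r q N :: real
  assumes "0 \<le> r" "r \<le> q" "0 < N"
  shows "- ln r * r \<le> - ln q * r + q / N - r + r * ln N"
proof (cases "r = 0")
  case False
  then have "0 < r" "0 < q"
    using assms by auto
  \<comment> \<open>\<open>ln x \<le> x - 1\<close> at \<open>x = q / (N r)\<close>\<close>
  then have "ln q - ln N - ln r \<le> q / (N * r) - 1"
    using ln_le_minus_one[of "q / (N * r)"] assms by (simp add: ln_div ln_mult)
  then have "r * (ln q - ln N - ln r) \<le> r * (q / (N * r) - 1)"
    using \<open>0 < r\<close> by (simp add: mult_left_mono)
  also have "\<dots> = q / N - r"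
    using \<open>0 < r\<close> assms by (simp add: field_simps)
  finally show ?thesis
    by (simp add: algebra_simps)
qed (use assms in simp)

context prob_space
begin

lemma integral_finite_support:
  fixes \<phi> :: "'b \<Rightarrow> real"
  assumes X: "X \<in> M \<rightarrow>\<^sub>M count_space UNIV" and "AE \<omega> in M. X \<omega> \<in> D" "finite D"
  shows "(\<integral>\<omega>. \<phi> (X \<omega>) \<partial>M) = (\<Sum>v\<in>D. \<phi> v * prob {\<omega>\<in>space M. X \<omega> = v})"
proof -
  have fibre: "{\<omega>\<in>space M. X \<omega> = v} \<in> events" for v
    using sets_Collect_count_space_comp[OF X] .
  have "(\<integral>\<omega>. \<phi> (X \<omega>) \<partial>M) = (\<integral>\<omega>. (\<Sum>v\<in>D. \<phi> v * indicator {\<omega>\<in>space M. X \<omega> = v} \<omega>) \<partial>M)"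
  proof (rule integral_cong_AE)
    show "(\<lambda>\<omega>. \<phi> (X \<omega>)) \<in> borel_measurable M"
      using X by (rule measurable_compose) simp
    show "(\<lambda>\<omega>. \<Sum>v\<in>D. \<phi> v * indicator {\<omega>\<in>space M. X \<omega> = v} \<omega>) \<in> borel_measurable M"
      using fibre by (intro borel_measurable_sum borel_measurable_times borel_measurable_const
          borel_measurable_indicator)
    show "AE \<omega> in M. \<phi> (X \<omega>) = (\<Sum>v\<in>D. \<phi> v * indicator {\<omega>\<in>space M. X \<omega> = v} \<omega>)"
      using AE_space assms(2)
    proof eventually_elim
      case (elim \<omega>)
      then show ?case
        using \<open>finite D\<close> by (simp add: indicator_def if_distrib[of "(*) _"] sum.delta)
    qed
  qed
  also have "\<dots> = (\<Sum>v\<in>D. \<phi> v * prob {\<omega>\<in>space M. X \<omega> = v})"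
    using fibre by (subst Bochner_Integration.integral_sum)
      (auto intro!: integrable_real_indicator simp: less_top[symmetric])
  finally show ?thesis .
qed

lemma sum_prob_fibres_eq_1:
  assumes "X \<in> M \<rightarrow>\<^sub>M count_space UNIV" "AE \<omega> in M. X \<omega> \<in> D" "finite D"
  shows "(\<Sum>v\<in>D. prob {\<omega>\<in>space M. X \<omega> = v}) = 1"
  using integral_finite_support[OF assms, of "\<lambda>_. 1"] by (simp add: prob_space)

lemma entropy_H_finite_support:
  assumes "X \<in> M \<rightarrow>\<^sub>M count_space UNIV" "AE \<omega> in M. X \<omega> \<in> D" "finite D"
  shows "entropy_H M (\<lambda>\<omega>. F (X \<omega>)) = (\<Sum>v\<in>D.
    - ln (prob {\<omega>\<in>space M. F (X \<omega>) = F v}) * prob {\<omega>\<in>space M. X \<omega> = v})"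
  unfolding entropy_H_def
  by (rule integral_finite_support[OF assms, of "\<lambda>v. - ln (prob {\<omega>\<in>space M. F (X \<omega>) = F v})"])

lemma entropy_H_comp_le:
  assumes X: "X \<in> M \<rightarrow>\<^sub>M count_space UNIV" and "AE \<omega> in M. X \<omega> \<in> D" "finite D"
  shows "entropy_H M (\<lambda>\<omega>. F (X \<omega>)) \<le> entropy_H M X"
proof -
  have "- ln (prob {\<omega>\<in>space M. F (X \<omega>) = F v}) * prob {\<omega>\<in>space M. X \<omega> = v}
      \<le> - ln (prob {\<omega>\<in>space M. X \<omega> = v}) * prob {\<omega>\<in>space M. X \<omega> = v}" for v
  proof (cases "prob {\<omega>\<in>space M. X \<omega> = v} = 0")
    case False
    then have "0 < prob {\<omega>\<in>space M. X \<omega> = v}"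
      by (simp add: zero_less_measure_iff)
    moreover have "prob {\<omega>\<in>space M. X \<omega> = v} \<le> prob {\<omega>\<in>space M. F (X \<omega>) = F v}"
      by (rule finite_measure_mono) (auto intro: sets_Collect_count_space_comp[OF X])
    ultimately show ?thesis
      by (intro mult_right_mono) auto
  qed simp
  then show ?thesis
    using entropy_H_finite_support[OF assms, of F] entropy_H_finite_support[OF assms, of "\<lambda>x. x"]
    by (simp add: sum_mono)
qed

lemma entropy_H_le_entropy_H_fst_plus_ln_card:
  fixes W :: "'a \<Rightarrow> 'b \<times> 'c"
  assumes W: "W \<in> M \<rightarrow>\<^sub>M count_space UNIV" and AE: "AE \<omega> in M. W \<omega> \<in> A \<times> T"
    and "finite A" "finite T" "T \<noteq> {}"
  shows "entropy_H M W \<le> entropy_H M (\<lambda>\<omega>. fst (W \<omega>)) + ln (card T)"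
proof -
  define r where "r w = prob {\<omega>\<in>space M. W \<omega> = w}" for w
  define q where "q a = prob {\<omega>\<in>space M. fst (W \<omega>) = a}" for a
  define N where "N = real (card T)"
  have fin: "finite (A \<times> T)" and N: "0 < N"
    using assms by (simp_all add: N_def card_gt_0_iff)
  have H_W: "entropy_H M W = (\<Sum>w\<in>A \<times> T. - ln (r w) * r w)"
    using entropy_H_finite_support[OF W AE fin, of "\<lambda>w. w"] by (simp add: r_def)
  have H_fst: "entropy_H M (\<lambda>\<omega>. fst (W \<omega>)) = (\<Sum>w\<in>A \<times> T. - ln (q (fst w)) * r w)"
    using entropy_H_finite_support[OF W AE fin, of fst] by (simp add: q_def r_def)
  have r_sum: "(\<Sum>w\<in>A \<times> T. r w) = 1"
    using sum_prob_fibres_eq_1[OF W AE fin] by (simp add: r_def)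
  have "(\<lambda>\<omega>. fst (W \<omega>)) \<in> M \<rightarrow>\<^sub>M count_space UNIV"
    using W by (rule measurable_compose) simp
  moreover have "AE \<omega> in M. fst (W \<omega>) \<in> A"
    using AE by eventually_elim auto
  ultimately have "(\<Sum>a\<in>A. q a) = 1"
    using sum_prob_fibres_eq_1 \<open>finite A\<close> by (simp add: q_def)
  moreover have "(\<Sum>w\<in>A \<times> T. q (fst w) / N) = (\<Sum>a\<in>A. \<Sum>z\<in>T. q a / N)"
    by (simp only: sum.cartesian_product) (simp add: split_beta)
  ultimately have q_sum: "(\<Sum>w\<in>A \<times> T. q (fst w) / N) = 1"
    using N by (simp add: N_def)
  have "r w \<le> q (fst w)" for w
    unfolding r_def q_def by (rule finite_measure_mono) (auto intro: sets_Collect_count_space_comp[OF W])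
  then have "(\<Sum>w\<in>A \<times> T. - ln (r w) * r w)
      \<le> (\<Sum>w\<in>A \<times> T. - ln (q (fst w)) * r w + q (fst w) / N - r w + r w * ln N)"
    by (intro sum_mono neg_ln_mult_le N) (simp add: r_def)
  also have "\<dots> = (\<Sum>w\<in>A \<times> T. - ln (q (fst w)) * r w) + (\<Sum>w\<in>A \<times> T. q (fst w) / N)
      - (\<Sum>w\<in>A \<times> T. r w) + (\<Sum>w\<in>A \<times> T. r w) * ln N"
    by (simp add: sum.distrib sum_subtractf sum_distrib_right sum_negf)
  finally show ?thesis
    using H_W H_fst q_sum r_sum by (simp add: N_def)
qed

end

lemma measurable_Pair_count_space:
  fixes f :: "'a \<Rightarrow> 'b::countable" and g :: "'a \<Rightarrow> 'c::countable"
  assumes "f \<in> M \<rightarrow>\<^sub>M count_space UNIV" "g \<in> M \<rightarrow>\<^sub>M count_space UNIV"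
  shows "(\<lambda>\<omega>. (f \<omega>, g \<omega>)) \<in> M \<rightarrow>\<^sub>M count_space UNIV"
  using measurable_Pair[OF assms] by (simp add: pair_measure_countable)

lemma measurable_map_count_space:
  fixes f :: "'i \<Rightarrow> 'a \<Rightarrow> 'b::countable"
  assumes "\<And>i. i \<in> set xs \<Longrightarrow> f i \<in> M \<rightarrow>\<^sub>M count_space UNIV"
  shows "(\<lambda>\<omega>. map (\<lambda>i. f i \<omega>) xs) \<in> M \<rightarrow>\<^sub>M count_space UNIV"
  using assms
proof (induction xs)
  case (Cons x xs)
  then have "(\<lambda>\<omega>. (f x \<omega>, map (\<lambda>i. f i \<omega>) xs)) \<in> M \<rightarrow>\<^sub>M count_space UNIV"
    by (intro measurable_Pair_count_space) auto
  from measurable_compose[OF this, of "\<lambda>(a, as). a # as" "count_space UNIV"] show ?case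
    by simp
qed simp

lemma (in prob_space) AE_in_pmf_of_set:
  assumes "X \<in> M \<rightarrow>\<^sub>M count_space UNIV" "distr M (count_space UNIV) X = measure_pmf (pmf_of_set A)"
    and "finite A" "A \<noteq> {}"
  shows "AE \<omega> in M. X \<omega> \<in> A"
proof -
  have "AE x in distr M (count_space UNIV) X. x \<in> A"
    unfolding assms(2) using AE_measure_pmf[of "pmf_of_set A"] assms(3,4) by simp
  then show ?thesis
    using AE_distr_iff[OF assms(1), of "\<lambda>x. x \<in> A"] by simp
qed

locale rha_process = prob_space M
  for M :: "'a measure" and k :: "nat \<Rightarrow> nat"
    and S :: "nat \<Rightarrow> 'a \<Rightarrow> (nat \<times> nat) set" and C :: "nat \<Rightarrow> 'a \<Rightarrow> nat" +
  assumes measurable_S: "S (Suc n) \<in> M \<rightarrow>\<^sub>M count_space UNIV"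
    and measurable_C: "C n \<in> M \<rightarrow>\<^sub>M count_space UNIV"
    and AE_S: "AE \<omega> in M. S (Suc n) \<omega> \<subseteq> {1..k n} \<times> {1..k n} \<and> card (S (Suc n) \<omega>) = k (Suc n)"
    and AE_C: "AE \<omega> in M. C n \<omega> \<in> {1..k n}"
begin

lemma k_pos: "1 \<le> k n"
proof -
  have "AE \<omega> in M. 1 \<le> k n"
    using AE_C[of n] by eventually_elim auto
  then show ?thesis
    by simp
qed

lemma measurable_rha_G: "(\<lambda>\<omega>. rha_G (\<lambda>i. S i \<omega>) m) \<in> M \<rightarrow>\<^sub>M count_space UNIV"
  unfolding rha_G_def
proof (rule measurable_map_count_space)
  fix i assume "i \<in> set [1..<m + 1]"
  then obtain i' where "i = Suc i'"
    using not0_implies_Suc by fastforce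
  then show "(\<lambda>\<omega>. lex_sorted_list (S i \<omega>)) \<in> M \<rightarrow>\<^sub>M count_space UNIV"
    using measurable_compose[OF measurable_S[of i'], of lex_sorted_list] by simp
qed

lemma AE_rha_G_in_rha_rules: "AE \<omega> in M. rha_G (\<lambda>i. S i \<omega>) m \<in> rha_rules k m"
proof -
  have "AE \<omega> in M. \<forall>i\<in>{..<m}. S (Suc i) \<omega> \<subseteq> {1..k i} \<times> {1..k i} \<and> card (S (Suc i) \<omega>) = k (Suc i)"
    by (intro AE_finite_allI AE_S) simp
  then show ?thesis
  proof eventually_elim
    case (elim \<omega>)
    have "finite (S (Suc i) \<omega>)" if "i < m" for i
      using elim that finite_subset[of "S (Suc i) \<omega>" "{1..k i} \<times> {1..k i}"] by auto
    with elim show ?case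
      by (simp add: rha_rules_def rha_G_nth set_lex_sorted_list length_lex_sorted_list)
        (simp add: rha_G_def)
  qed
qed

lemma entropy_rha_block_le:
  assumes "1 \<le> j" "l \<le> n"
  shows "entropy_H M (\<lambda>\<omega>. rha_block (\<lambda>m. S m \<omega>) (\<lambda>m. C m \<omega>) n j)
    \<le> entropy_H M (\<lambda>\<omega>. rha_G (\<lambda>m. S m \<omega>) l) + 2 ^ (n - l) * ln (real (k l))"
proof -
  obtain e where e: "2 ^ e \<le> j" "j < 2 ^ Suc e"
    using ex_power_ivl1[of 2 j] assms(1) by auto
  define m t where "m = n + e" and "t = j - 2 ^ e"
  define window where "window gs c = take (2 ^ (n - l)) (drop (t * 2 ^ (n - l)) (expand gs l m c))"
    for gs c
  define W where "W \<omega> = (rha_G (\<lambda>i. S i \<omega>) l, window (rha_G (\<lambda>i. S i \<omega>) m) (C m \<omega>))" for \<omega>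
  define T where "T = {zs. set zs \<subseteq> {1..k l} \<and> length zs = 2 ^ (n - l)}"
  have block: "rha_block (\<lambda>m. S m \<omega>) (\<lambda>m. C m \<omega>) n j
      = concat (map (expand (fst (W \<omega>)) 0 l) (snd (W \<omega>)))" for \<omega>
    using rha_block_eq_expand[OF e assms(2)] by (simp add: W_def window_def m_def t_def)
  have "(\<lambda>\<omega>. window (rha_G (\<lambda>i. S i \<omega>) m) (C m \<omega>)) \<in> M \<rightarrow>\<^sub>M count_space UNIV"
    using measurable_compose[OF measurable_Pair_count_space[OF measurable_rha_G measurable_C],
        of "case_prod window" "count_space UNIV"] by simp
  then have W: "W \<in> M \<rightarrow>\<^sub>M count_space UNIV"
    unfolding W_def by (intro measurable_Pair_count_space measurable_rha_G)
  have window_in_T: "window gs c \<in> T" if "gs \<in> rha_rules k m" "c \<in> {1..k m}" for gs c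
    using window_expand_in_lists[OF that[unfolded m_def] assms(2)] e
    by (simp add: window_def T_def m_def t_def)
  have rha_G_l: "rha_G (\<lambda>i. S i \<omega>) l \<in> rha_rules k l"
    if "rha_G (\<lambda>i. S i \<omega>) m \<in> rha_rules k m" for \<omega>
    using take_in_rha_rules[OF that, of l] assms(2) by (simp add: take_rha_G m_def)
  have AE_W: "AE \<omega> in M. W \<omega> \<in> rha_rules k l \<times> T"
    using AE_rha_G_in_rha_rules[of m] AE_C[of m]
    by eventually_elim (simp add: W_def window_in_T rha_G_l)
  have "finite T" "card T = k l ^ 2 ^ (n - l)"
    by (simp_all add: T_def finite_lists_length_eq card_lists_length_eq)
  moreover have "T \<noteq> {}"
    using \<open>card T = k l ^ 2 ^ (n - l)\<close> k_pos[of l] by (metis card.empty not_one_le_zero one_le_power)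
  moreover have "(\<lambda>\<omega>. fst (W \<omega>)) = (\<lambda>\<omega>. rha_G (\<lambda>i. S i \<omega>) l)"
    by (simp add: W_def)
  ultimately have "entropy_H M W \<le> entropy_H M (\<lambda>\<omega>. rha_G (\<lambda>i. S i \<omega>) l) + 2 ^ (n - l) * ln (real (k l))"
    using entropy_H_le_entropy_H_fst_plus_ln_card[OF W AE_W finite_rha_rules] k_pos[of l]
    by (simp add: ln_realpow)
  moreover have "entropy_H M (\<lambda>\<omega>. concat (map (expand (fst (W \<omega>)) 0 l) (snd (W \<omega>)))) \<le> entropy_H M W"
    by (rule entropy_H_comp_le[OF W AE_W]) (simp add: finite_rha_rules \<open>finite T\<close>)
  ultimately show ?thesis
    unfolding block by simp
qed

end

lemma rha_process_uniform:
  assumes "prob_space M"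
    and S: "\<And>n. S (Suc n) \<in> M \<rightarrow>\<^sub>M count_space UNIV" and C: "\<And>n. C n \<in> M \<rightarrow>\<^sub>M count_space UNIV"
    and "\<And>n. 1 \<le> k n" "\<And>n. k (Suc n) \<le> k n ^ 2"
    and "\<And>n. distr M (count_space UNIV) (S (Suc n)) =
           measure_pmf (pmf_of_set {A. A \<subseteq> {1..k n} \<times> {1..k n} \<and> card A = k (Suc n)})"
    and "\<And>n. distr M (count_space UNIV) (C n) = measure_pmf (pmf_of_set {1..k n})"
  shows "rha_process M k S C"
proof -
  interpret prob_space M
    by fact
  show ?thesis
  proof
    fix n
    define \<A> where "\<A> = {A. A \<subseteq> {1..k n} \<times> {1..k n} \<and> card A = k (Suc n)}"
    have "k (Suc n) \<le> card ({1..k n} \<times> {1..k n})"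
      using assms(5)[of n] by (simp add: card_cartesian_product power2_eq_square)
    then obtain B where "B \<subseteq> {1..k n} \<times> {1..k n}" "card B = k (Suc n)"
      by (rule obtain_subset_with_card_n)
    then have "\<A> \<noteq> {}"
      by (auto simp: \<A>_def)
    have "finite \<A>"
      unfolding \<A>_def by (rule finite_subset[of _ "Pow ({1..k n} \<times> {1..k n})"]) auto
    then have "AE \<omega> in M. S (Suc n) \<omega> \<in> \<A>"
      using \<open>\<A> \<noteq> {}\<close> by (rule AE_in_pmf_of_set[OF S assms(6)[of n, folded \<A>_def]])
    then show "AE \<omega> in M. S (Suc n) \<omega> \<subseteq> {1..k n} \<times> {1..k n} \<and> card (S (Suc n) \<omega>) = k (Suc n)"
      by (simp add: \<A>_def)
    show "AE \<omega> in M. C n \<omega> \<in> {1..k n}"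
      using AE_in_pmf_of_set[OF C assms(7)] assms(4)[of n] by simp
  qed (fact S C)+
qed

theorem proposition8:
  fixes M :: "'a measure" and k :: "nat \<Rightarrow> nat"
    and S :: "nat \<Rightarrow> 'a \<Rightarrow> (nat \<times> nat) set" and C :: "nat \<Rightarrow> 'a \<Rightarrow> nat"
    and n j :: nat
  assumes "prob_space M"
    and "\<forall>n. 1 \<le> k n"
    and "\<forall>n\<ge>1. k (n - 1) \<le> k n \<and> k n \<le> k (n - 1) ^ 2"
    and "\<forall>n\<ge>1. distr M (count_space UNIV) (S n) =
           measure_pmf (pmf_of_set {A. A \<subseteq> {1..k (n - 1)} \<times> {1..k (n - 1)} \<and> card A = k n})"
    and "\<forall>n. distr M (count_space UNIV) (C n) = measure_pmf (pmf_of_set {1..k n})"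
    and "prob_space.indep_vars M (\<lambda>_. count_space UNIV)
           (\<lambda>i \<omega>. case i of Inl m \<Rightarrow> Inl (S m \<omega>) | Inr m \<Rightarrow> Inr (C m \<omega>))
           ({Inl m | m. 1 \<le> m} \<union> range Inr)"
    and "1 \<le> j"
  shows "entropy_H M (\<lambda>\<omega>. rha_block (\<lambda>m. S m \<omega>) (\<lambda>m. C m \<omega>) n j)
         \<le> Min ((\<lambda>l. entropy_H M (\<lambda>\<omega>. rha_G (\<lambda>m. S m \<omega>) l) + 2 ^ (n - l) * ln (real (k l))) ` {0..n})"
proof -
  interpret prob_space M
    by fact
  have indep_measurable: "(\<lambda>\<omega>. case i of Inl m \<Rightarrow> Inl (S m \<omega>) | Inr m \<Rightarrow> Inr (C m \<omega>))
      \<in> M \<rightarrow>\<^sub>M count_space UNIV" if "i \<in> {Inl m | m. 1 \<le> m} \<union> range Inr" for i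
    using assms(6) that unfolding indep_vars_def by blast
  have "S (Suc n) \<in> M \<rightarrow>\<^sub>M count_space UNIV" "C n \<in> M \<rightarrow>\<^sub>M count_space UNIV" for n
    using measurable_compose[OF indep_measurable[of "Inl (Suc n)"] measurable_count_space[of projl]]
      measurable_compose[OF indep_measurable[of "Inr n"] measurable_count_space[of projr]]
    by simp_all
  then interpret rha_process M k S C
    using assms(1-5) by (intro rha_process_uniform) auto
  show ?thesis
    using assms(7) by (intro Min.boundedI) (auto intro: entropy_rha_block_le)
qed

end
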